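(* Let $n$ be a positive integer, $g=3n+2$, and let $G=\{\ell_1<\dots<\ell_g\}$ be a pure $(2n+1)$-sparse gapset of genus $g$ with multiplicity $m$ and depth $q\le 3$. Let $\alpha=\max\{i:\ell_{i+1}-\ell_i=2n+1\}$. Then $\ell_\alpha\le 2m-1$.
   Context: A gapset is a finite set $G\subset\mathbb{N}=\{1,2,\dots\}$ such that whenever $z\in G$ and $z=x+y$ with $x,y\in\mathbb{N}$, then $x\in G$ or $y\in G$; its genus is $g=\#G$ (a nonempty gapset of genus $g$ is contained in $[1,2g-1]$). Multiplicity $m(G)=\min\{s\in\mathbb{N}:s\notin G\}$; conductor $c(G)=\min\{s\in\mathbb{N}: s+t\notin G\ \forall t\in\mathbb{N}_0\}$; depth $q(G)=\lceil c(G)/m(G)\rceil$. $G$ is pure $\kappa$-sparse if $\ell_{i+1}-\ell_i\le\kappa$ for all $i$ with equality for some $i$. *)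

theory Defs
  imports Complex_Main
begin

definition gapset :: "nat set \<Rightarrow> bool" where
  "gapset G \<longleftrightarrow> finite G \<and> 0 \<notin> G \<and>
     (\<forall>z\<in>G. \<forall>x y. 1 \<le> x \<and> 1 \<le> y \<and> z = x + y \<longrightarrow> x \<in> G \<or> y \<in> G)"

definition genus :: "nat set \<Rightarrow> nat" where
  "genus G = card G"

definition multiplicity :: "nat set \<Rightarrow> nat" where
  "multiplicity G = (LEAST s. 1 \<le> s \<and> s \<notin> G)"

definition conductor :: "nat set \<Rightarrow> nat" where
  "conductor G = (LEAST s. 1 \<le> s \<and> (\<forall>t. s + t \<notin> G))"

definition depth :: "nat set \<Rightarrow> nat" where
  "depth G = nat \<lceil>real (conductor G) / real (multiplicity G)\<rceil>"

text \<open>The i-th smallest element (1-indexed): G = {elt G 1 < ... < elt G g}.\<close>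
definition elt :: "nat set \<Rightarrow> nat \<Rightarrow> nat" where
  "elt G i = sorted_list_of_set G ! (i - 1)"

definition pure_sparse :: "nat \<Rightarrow> nat set \<Rightarrow> bool" where
  "pure_sparse \<kappa> G \<longleftrightarrow>
     (\<forall>i. 1 \<le> i \<and> i < card G \<longrightarrow> elt G (i + 1) - elt G i \<le> \<kappa>) \<and>
     (\<exists>i. 1 \<le> i \<and> i < card G \<and> elt G (i + 1) - elt G i = \<kappa>)"

end

theory Submission
  imports Defs
begin

text \<open>Let \<open>x = \<ell>\<^sub>\<alpha>\<close> and \<open>y = x + 2n + 1\<close>, both gaps, and suppose \<open>x \<ge> 2m\<close>.
  Since \<open>2m\<close> is not a gap, \<open>x > 2m\<close>; since \<open>y < c \<le> 3m\<close>, also \<open>m > 2n + 2\<close>.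
  The gap \<open>y\<close> forces one of \<open>b\<close>, \<open>y - b\<close> to be a gap for every \<open>b\<close>, so the
  \<open>\<ge> 2n + 1\<close> integers strictly between \<open>m\<close> and \<open>y - m\<close> contain at least \<open>n + 1\<close> gaps.
  Together with \<open>1, \<dots>, m - 1\<close> and \<open>y - m, x, y\<close> this gives at least \<open>m + n + 3 > 3n + 2\<close>
  gaps.\<close>

lemma elt_mem:
  assumes "finite G" "1 \<le> i" "i \<le> card G"
  shows "elt G i \<in> G"
proof -
  have "i - 1 < length (sorted_list_of_set G)" using assms by simp
  then have "sorted_list_of_set G ! (i - 1) \<in> set (sorted_list_of_set G)" by (rule nth_mem)
  then show ?thesis using assms(1) by (simp add: elt_def)
qed

lemma exists_pos_notin_finite:
  assumes "finite (G :: nat set)"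
  shows "\<exists>s. 1 \<le> s \<and> s \<notin> G"
  using ex_new_if_finite[OF infinite_UNIV_nat, of "insert 0 G"] assms by (auto simp: Suc_le_eq)

lemma
  assumes "finite G"
  shows multiplicity_pos: "0 < multiplicity G"
    and multiplicity_notin: "multiplicity G \<notin> G"
  using LeastI_ex[OF exists_pos_notin_finite[OF assms]] unfolding multiplicity_def by auto

lemma mem_if_less_multiplicity: "1 \<le> s \<Longrightarrow> s < multiplicity G \<Longrightarrow> s \<in> G"
  unfolding multiplicity_def using not_less_Least by blast

lemma less_conductor:
  assumes "finite G" "z \<in> G"
  shows "z < conductor G"
proof (rule ccontr)
  have "\<forall>t. Suc (Max G) + t \<notin> G"
    using Max_ge[OF assms(1)] by (metis add_Suc not_less_eq_eq le_add1)
  then have "\<exists>s. 1 \<le> s \<and> (\<forall>t. s + t \<notin> G)" by (intro exI[of _ "Suc (Max G)"]) simp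
  then have "\<forall>t. conductor G + t \<notin> G" unfolding conductor_def by (rule LeastI2_ex) blast
  moreover assume "\<not> z < conductor G"
  then have "z = conductor G + (z - conductor G)" by simp
  ultimately show False using assms(2) by metis
qed

lemma conductor_le_depth_mult:
  assumes "0 < multiplicity G"
  shows "conductor G \<le> depth G * multiplicity G"
proof -
  have "real (conductor G) / real (multiplicity G) \<le> real (depth G)"
    unfolding depth_def by linarith
  then show ?thesis using assms by (simp add: divide_le_eq flip: of_nat_mult)
qed

lemma gapset_diff_mem:
  assumes "gapset G" "z \<in> G" "u \<notin> G" "1 \<le> u" "u < z"
  shows "z - u \<in> G"
proof -
  have "z = u + (z - u)" "1 \<le> z - u" using assms(5) by simp_all
  then show ?thesis using assms(1-4) unfolding gapset_def by blast
qed

lemma gapset_double_notin: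
  assumes "gapset G" "u \<notin> G" "1 \<le> u"
  shows "2 * u \<notin> G"
  using gapset_diff_mem[OF assms(1) _ assms(2,3)] assms(2,3) by fastforce

lemma card_interval_le_twice_card_gaps:
  assumes "gapset G" "y \<in> G"
  shows "card {a<..<y - a} \<le> 2 * card (G \<inter> {a<..<y - a})"
proof -
  define S where "S = G \<inter> {a<..<y - a}"
  have "{a<..<y - a} \<subseteq> S \<union> (\<lambda>b. y - b) ` S"
  proof
    fix b assume b: "b \<in> {a<..<y - a}"
    show "b \<in> S \<union> (\<lambda>b. y - b) ` S"
    proof (cases "b \<in> G")
      case True then show ?thesis using b S_def by auto
    next
      case False
      then have "y - b \<in> G" using b by (intro gapset_diff_mem[OF assms False]) auto
      moreover have "y - b \<in> {a<..<y - a}" "b = y - (y - b)" using b by auto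
      ultimately show ?thesis unfolding S_def by blast
    qed
  qed
  then have "card {a<..<y - a} \<le> card (S \<union> (\<lambda>b. y - b) ` S)"
    by (intro card_mono) (auto simp: S_def)
  also have "\<dots> \<le> card S + card ((\<lambda>b. y - b) ` S)" by (rule card_Un_le)
  also have "\<dots> \<le> 2 * card S" using card_image_le[of S "\<lambda>b. y - b"] by (simp add: S_def)
  finally show ?thesis unfolding S_def .
qed

lemma card_ge_if_gap_pair_above_double_multiplicity:
  assumes "gapset G" "x \<in> G" "x + d \<in> G"
    and "2 * multiplicity G < x" "0 < d" "d < multiplicity G"
  shows "multiplicity G + (d + 1) div 2 + 2 \<le> card G"
proof -
  define m where "m = multiplicity G"
  define y where "y = x + d"
  define S where "S = G \<inter> {m<..<y - m}"
  have fin: "finite G" using assms(1) unfolding gapset_def by blast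
  have m: "0 < m" "m \<notin> G"
    using multiplicity_pos[OF fin] multiplicity_notin[OF fin] by (simp_all add: m_def)
  have bounds: "2 * m < x" "0 < d" "d < m" using assms(4-6) by (simp_all add: m_def)
  have yG: "y \<in> G" and ymG: "y - m \<in> G"
    using assms(3) gapset_diff_mem[OF assms(1) _ m(2)] m bounds by (simp_all add: y_def)
  have "d \<le> 2 * card S"
    using card_interval_le_twice_card_gaps[OF assms(1) yG, of m] bounds by (simp add: S_def y_def)
  then have cS: "(d + 1) div 2 \<le> card S" by linarith
  have "{1..<m} \<union> S \<union> {y - m, x, y} \<subseteq> G"
    using mem_if_less_multiplicity ymG assms(2) yG by (auto simp: S_def m_def)
  then have "card ({1..<m} \<union> S \<union> {y - m, x, y}) \<le> card G" by (rule card_mono[OF fin])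
  moreover have "card ({1..<m} \<union> S \<union> {y - m, x, y}) = (m - 1) + card S + 3"
  proof -
    have "finite S" using fin by (simp add: S_def)
    moreover have "({1..<m} \<union> S) \<inter> {y - m, x, y} = {}" "{1..<m} \<inter> S = {}"
      using bounds by (auto simp: S_def y_def)
    moreover have "y - m < x" "x < y" using bounds by (simp_all add: y_def)
    then have "card {y - m, x, y} = 3" by simp
    ultimately show ?thesis by (simp add: card_Un_disjoint del: Un_insert_right)
  qed
  ultimately have "m + card S + 2 \<le> card G" using m(1) by linarith
  with cS have "m + (d + 1) div 2 + 2 \<le> card G" by linarith
  then show ?thesis by (simp only: m_def)
qed

theorem mainTheorem17:
  fixes n :: nat and G :: "nat set"
  assumes "0 < n"
    and "gapset G"
    and "genus G = 3 * n + 2"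
    and "pure_sparse (2 * n + 1) G"
    and "depth G \<le> 3"
  shows "elt G (Max {i. 1 \<le> i \<and> i < genus G \<and> elt G (i + 1) - elt G i = 2 * n + 1})
           \<le> 2 * multiplicity G - 1"
proof -
  define A where "A = {i. 1 \<le> i \<and> i < genus G \<and> elt G (i + 1) - elt G i = 2 * n + 1}"
  define x where "x = elt G (Max A)"
  define m where "m = multiplicity G"
  have fin: "finite G" using assms(2) unfolding gapset_def by blast
  have "finite A" "A \<noteq> {}" using assms(4) unfolding pure_sparse_def A_def genus_def by auto
  then have "Max A \<in> A" by (rule Max_in)
  then have xG: "x \<in> G" and "elt G (Max A + 1) \<in> G" "elt G (Max A + 1) - x = 2 * n + 1"
    using elt_mem[OF fin, of "Max A"] elt_mem[OF fin, of "Max A + 1"]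
    by (auto simp: A_def x_def genus_def)
  moreover from this(3) have "elt G (Max A + 1) = x + (2 * n + 1)" by linarith
  ultimately have yG: "x + (2 * n + 1) \<in> G" by simp
  have m: "0 < m" "m \<notin> G"
    using multiplicity_pos[OF fin] multiplicity_notin[OF fin] by (simp_all add: m_def)
  have "x + (2 * n + 1) < conductor G" by (rule less_conductor[OF fin yG])
  also have "\<dots> \<le> depth G * m" using conductor_le_depth_mult m(1) by (simp add: m_def)
  also have "\<dots> \<le> 3 * m" using assms(5) by simp
  finally have "x + (2 * n + 1) < 3 * m" .
  have "x < 2 * m"
  proof (rule ccontr)
    assume "\<not> x < 2 * m"
    moreover have "x \<noteq> 2 * m" using gapset_double_notin[OF assms(2) m(2)] m(1) xG by auto
    ultimately have "2 * m < x" by linarith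
    with \<open>x + (2 * n + 1) < 3 * m\<close> have "2 * n + 1 < m" by linarith
    with card_ge_if_gap_pair_above_double_multiplicity[OF assms(2) xG yG] \<open>2 * m < x\<close>
    have "m + (n + 1) + 2 \<le> card G" by (simp add: m_def)
    with \<open>2 * n + 1 < m\<close> assms(3) show False by (simp add: genus_def)
  qed
  then show ?thesis unfolding x_def A_def m_def by linarith
qed

end
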